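(* Assume $2^{\aleph_0}=\aleph_1$ (so that $\omega_1^{<\omega_1}=\omega_1$). Let $G$ be a closed $\omega_1$-Baire subgroup of $S_{\omega_1}$. Then there is a good quantifier $Q_G$ of type $\langle 2\rangle$ on $\omega_1$ with $\mathrm{Aut}(Q_G)=G$.
   Context: $S_{\omega_1}$ is the group of permutations of $\omega_1$ with the subspace topology from $\omega_1^{\omega_1}$, where basic open sets are given by countable partial functions. $2^{\omega_1\times\omega_1}$ has basic open sets $\{f:s\subseteq f\}$ for countable partial functions $s$. A subspace is $\omega_1$-Baire if the intersection of any $\omega_1$ many open dense subsets of it is dense in it. A quantifier of type $\langle 2\rangle$ on $\omega_1$ is a family $Q$ of subsets of $\omega_1\times\omega_1$, i.e. $Q\subseteq2^{\omega_1\times\omega_1}$; it is downwards closed if closed under subsets. For a map $p$ and $A\subseteq\omega_1^2$, $p(A)=\{(p(a),p(b)):(a,b)\in A\}$. A function $p:\beta\to\omega_1$ with $\beta<\omega_1$ is compatible with $Q$ if for every $A\subseteq\beta\times\beta$, $A\in Q\iff p(A)\in Q$. A permutation $f$ of $\omega_1$ fixes $Q$ if $A\in Q\iff f(A)\in Q$ for all $A\subseteq\omega_1^2$; $\mathrm{Aut}(Q)$ is the group of such permutations. $Q$ is good if it is closed, downwards closed, and every injection $p:\beta\to\omega_1$ with $\beta<\omega_1$ compatible with $Q$ extends to a permutation of $\omega_1$ fixing $Q$. *)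

theory Defs
  imports Main "HOL-Library.Countable_Set" "HOL-Library.Equipollence"
begin

text \<open>The type 'a together with a well-order W on it represents omega_1:
  W is a well-order of the whole type, the type is uncountable, and every
  proper initial segment is countable.\<close>
definition omega1_order :: "'a rel \<Rightarrow> bool" where
  "omega1_order W \<longleftrightarrow> well_order_on UNIV W \<and> \<not> countable (UNIV :: 'a set)
      \<and> (\<forall>a. countable (underS W a))"

text \<open>Topology on function spaces 'i => 'v generated by countable partial functions.\<close>
definition agrees :: "('i \<rightharpoonup> 'v) \<Rightarrow> ('i \<Rightarrow> 'v) \<Rightarrow> bool" where
  "agrees s f \<longleftrightarrow> (\<forall>x\<in>dom s. s x = Some (f x))"

definition closed_in_sub :: "('i \<Rightarrow> 'v) set \<Rightarrow> ('i \<Rightarrow> 'v) set \<Rightarrow> bool" where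
  "closed_in_sub X C \<longleftrightarrow> C \<subseteq> X \<and>
     (\<forall>f\<in>X - C. \<exists>s. countable (dom s) \<and> agrees s f \<and> (\<forall>g\<in>C. \<not> agrees s g))"

definition open_in_sub :: "('i \<Rightarrow> 'v) set \<Rightarrow> ('i \<Rightarrow> 'v) set \<Rightarrow> bool" where
  "open_in_sub X U \<longleftrightarrow> U \<subseteq> X \<and>
     (\<forall>f\<in>U. \<exists>s. countable (dom s) \<and> agrees s f \<and> (\<forall>g\<in>X. agrees s g \<longrightarrow> g \<in> U))"

definition dense_in_sub :: "('i \<Rightarrow> 'v) set \<Rightarrow> ('i \<Rightarrow> 'v) set \<Rightarrow> bool" where
  "dense_in_sub X D \<longleftrightarrow>
     (\<forall>s. countable (dom s) \<longrightarrow> (\<exists>g\<in>X. agrees s g) \<longrightarrow> (\<exists>g\<in>D. agrees s g))"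

text \<open>X is kappa-Baire where kappa = |I|: the intersection of any I-indexed family
  of open dense subsets of X is dense in X (used with I = the omega_1 type).\<close>
definition Baire_idx :: "'a set \<Rightarrow> ('i \<Rightarrow> 'v) set \<Rightarrow> bool" where
  "Baire_idx I X \<longleftrightarrow> (\<forall>U :: 'a \<Rightarrow> ('i \<Rightarrow> 'v) set.
     (\<forall>i\<in>I. open_in_sub X (U i) \<and> dense_in_sub X (U i)) \<longrightarrow> dense_in_sub X (\<Inter>i\<in>I. U i))"

definition perm_subgroup :: "('a \<Rightarrow> 'a) set \<Rightarrow> bool" where
  "perm_subgroup G \<longleftrightarrow> G \<subseteq> {f. bij f} \<and> id \<in> G \<and>
     (\<forall>f\<in>G. \<forall>g\<in>G. f \<circ> g \<in> G) \<and> (\<forall>f\<in>G. inv f \<in> G)"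

text \<open>Quantifiers of type <2>: Q :: ('a \<times> 'a) set set.\<close>
definition pimg :: "('a \<Rightarrow> 'a) \<Rightarrow> ('a \<times> 'a) set \<Rightarrow> ('a \<times> 'a) set" where
  "pimg p A = (\<lambda>(a, b). (p a, p b)) ` A"

definition q_closed :: "('a \<times> 'a) set set \<Rightarrow> bool" where
  "q_closed Q \<longleftrightarrow> closed_in_sub UNIV {P. Collect P \<in> Q}"

definition down_closed :: "('a \<times> 'a) set set \<Rightarrow> bool" where
  "down_closed Q \<longleftrightarrow> (\<forall>A\<in>Q. \<forall>B. B \<subseteq> A \<longrightarrow> B \<in> Q)"

definition compatible :: "'a set \<Rightarrow> ('a \<Rightarrow> 'a) \<Rightarrow> ('a \<times> 'a) set set \<Rightarrow> bool" where
  "compatible \<beta> p Q \<longleftrightarrow> (\<forall>A. A \<subseteq> \<beta> \<times> \<beta> \<longrightarrow> (A \<in> Q \<longleftrightarrow> pimg p A \<in> Q))"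

definition fixes_Q :: "('a \<Rightarrow> 'a) \<Rightarrow> ('a \<times> 'a) set set \<Rightarrow> bool" where
  "fixes_Q f Q \<longleftrightarrow> (\<forall>A. A \<in> Q \<longleftrightarrow> pimg f A \<in> Q)"

definition Aut :: "('a \<times> 'a) set set \<Rightarrow> ('a \<Rightarrow> 'a) set" where
  "Aut Q = {f. bij f \<and> fixes_Q f Q}"

text \<open>Ordinals beta < omega_1 are the proper initial segments underS W a.\<close>
definition good :: "'a rel \<Rightarrow> ('a \<times> 'a) set set \<Rightarrow> bool" where
  "good W Q \<longleftrightarrow> q_closed Q \<and> down_closed Q \<and>
     (\<forall>a p. inj_on p (underS W a) \<longrightarrow> compatible (underS W a) p Q \<longrightarrow>
        (\<exists>f. bij f \<and> fixes_Q f Q \<and> (\<forall>x\<in>underS W a. f x = p x)))"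

end

theory Submission
  imports Defs
begin

text \<open>
  Fix an injection c of omega_1 into the reals (here: nat set), which
  exists by CH, and an omega-chain e consisting of the first omega elements of omega_1.
  The coded relation R has a loop at e 0, the successor edges of the chain, and an edge
  from every point y off the chain to e j for each j in a binary code of c y.  On every
  set S that is closed downwards along the chain, R is rigid: every injective
  R-homomorphism from S into R is the identity on S.

  For a permutation group G let Q be the orbit quantifier of R: a set A belongs to Q iff
  every countable subset of A is contained in a G-translate of R.  Q is closed and
  downwards closed for any G and R, and G fixes Q.  Rigidity of R on the (countable)
  initial segments of omega_1 turns every compatible partial map into the restriction of
  an element of G, which gives goodness; since G is closed, it also gives Aut Q \<subseteq> G.
\<close>

section \<open>Binary codes of sets of naturals\<close>

definition code_digits :: "nat set \<Rightarrow> nat set" where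
  "code_digits C = (\<lambda>i. 2 * i) ` C \<union> (\<lambda>i. 2 * i + 1) ` (- C)"

lemma code_digits_subset_eq:
  assumes "code_digits C \<subseteq> code_digits D"
  shows "C = D"
proof (intro set_eqI iffI)
  fix i assume "i \<in> C"
  then have "2 * i \<in> code_digits D" using assms unfolding code_digits_def by blast
  then show "i \<in> D" unfolding code_digits_def by auto presburger
next
  fix i assume "i \<in> D"
  show "i \<in> C"
  proof (rule ccontr)
    assume "i \<notin> C"
    then have "2 * i + 1 \<in> code_digits D" using assms unfolding code_digits_def by blast
    with \<open>i \<in> D\<close> show False unfolding code_digits_def by auto presburger
  qed
qed

lemma code_digits_meets: "\<exists>j\<in>code_digits C. j = 2 * n \<or> j = 2 * n + 1"
  unfolding code_digits_def by (cases "n \<in> C") auto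

section \<open>The coded relation and its rigidity\<close>

definition coded_rel :: "(nat \<Rightarrow> 'a) \<Rightarrow> ('a \<Rightarrow> nat set) \<Rightarrow> ('a \<times> 'a) set" where
  "coded_rel e c = insert (e 0, e 0) (range (\<lambda>i. (e i, e (Suc i)))
     \<union> {(y, e j) | y j. y \<notin> range e \<and> j \<in> code_digits (c y)})"

lemma coded_rel_loop: "inj e \<Longrightarrow> (x, x) \<in> coded_rel e c \<Longrightarrow> x = e 0"
  unfolding coded_rel_def by (auto dest: injD)

lemma coded_rel_from_chain:
  "inj e \<Longrightarrow> (e m, z) \<in> coded_rel e c \<Longrightarrow> z = e (Suc m) \<or> (m = 0 \<and> z = e 0)"
  unfolding coded_rel_def by (auto dest: injD)

lemma coded_rel_from_off_chain:
  "y \<notin> range e \<Longrightarrow> (y, z) \<in> coded_rel e c \<Longrightarrow> \<exists>j\<in>code_digits (c y). z = e j"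
  unfolding coded_rel_def by auto

lemma coded_rel_edges:
  "(e 0, e 0) \<in> coded_rel e c"
  "(e i, e (Suc i)) \<in> coded_rel e c"
  "y \<notin> range e \<Longrightarrow> j \<in> code_digits (c y) \<Longrightarrow> (y, e j) \<in> coded_rel e c"
  unfolding coded_rel_def by auto

definition chain_closed :: "(nat \<Rightarrow> 'a) \<Rightarrow> 'a set \<Rightarrow> bool" where
  "chain_closed e S \<longleftrightarrow>
     (\<forall>i. e (Suc i) \<in> S \<longrightarrow> e i \<in> S) \<and> (\<forall>y\<in>S. y \<notin> range e \<longrightarrow> range e \<subseteq> S)"

definition rigid_on :: "('a \<times> 'a) set \<Rightarrow> 'a set \<Rightarrow> bool" where
  "rigid_on R S \<longleftrightarrow> (\<forall>k. inj_on k S \<longrightarrow> (\<forall>x\<in>S. \<forall>y\<in>S. (x, y) \<in> R \<longrightarrow> (k x, k y) \<in> R)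
     \<longrightarrow> (\<forall>x\<in>S. k x = x))"

text \<open>A homomorphism fixes the chain: the loop pins e 0 and the successor edges propagate.\<close>
lemma coded_rel_hom_fixes_chain:
  assumes e: "inj e" and S: "chain_closed e S" and k: "inj_on k S"
    and hom: "\<forall>x\<in>S. \<forall>y\<in>S. (x, y) \<in> coded_rel e c \<longrightarrow> (k x, k y) \<in> coded_rel e c"
  shows "e i \<in> S \<Longrightarrow> k (e i) = e i"
proof (induction i)
  case 0
  then show ?case using hom coded_rel_edges(1) coded_rel_loop[OF e] by blast
next
  case (Suc i)
  then have pred: "e i \<in> S" using S unfolding chain_closed_def by blast
  with Suc.IH have ki: "k (e i) = e i" .
  have "(e i, k (e (Suc i))) \<in> coded_rel e c"
    using hom coded_rel_edges(2) pred Suc.prems ki by metis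
  then have "k (e (Suc i)) = e (Suc i) \<or> (i = 0 \<and> k (e (Suc i)) = e 0)"
    by (rule coded_rel_from_chain[OF e])
  moreover have "k (e (Suc i)) \<noteq> k (e i)"
    using inj_onD[OF k _ Suc.prems pred] injD[OF e] by fastforce
  ultimately show ?case using ki by auto
qed

text \<open>A homomorphism fixes each point y off the chain: its image cannot lie on the chain
  (both digits 2 or 3 and 4 or 5 would have to be its successor), and off the chain the
  edges into the fixed chain force the code of the image to contain the code of y.\<close>
lemma coded_rel_hom_fixes_off_chain:
  assumes e: "inj e" and c: "inj c" and S: "chain_closed e S" and k: "inj_on k S"
    and hom: "\<forall>x\<in>S. \<forall>y\<in>S. (x, y) \<in> coded_rel e c \<longrightarrow> (k x, k y) \<in> coded_rel e c"
    and y: "y \<in> S" "y \<notin> range e"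
  shows "k y = y"
proof -
  have chain_in_S: "e j \<in> S" for j using S y unfolding chain_closed_def by blast
  have edge: "(k y, e j) \<in> coded_rel e c" if "j \<in> code_digits (c y)" for j
    using hom y(1) chain_in_S coded_rel_edges(3)[where c = c, OF y(2) that]
      coded_rel_hom_fixes_chain[OF e S k hom chain_in_S] by metis
  have off: "k y \<notin> range e"
  proof
    assume "k y \<in> range e"
    then obtain m where m: "k y = e m" by blast
    have succ: "j = Suc m" if "j \<in> code_digits (c y)" "j \<ge> 2" for j
      using coded_rel_from_chain[OF e edge[OF that(1), unfolded m]] that(2) injD[OF e]
      by fastforce
    obtain j1 where j1: "j1 \<in> code_digits (c y)" "j1 = 2 \<or> j1 = 3"
      using code_digits_meets[of "c y" 1] by auto
    obtain j2 where j2: "j2 \<in> code_digits (c y)" "j2 = 4 \<or> j2 = 5"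
      using code_digits_meets[of "c y" 2] by auto
    have "j1 = Suc m" "j2 = Suc m" using succ[OF j1(1)] succ[OF j2(1)] j1(2) j2(2) by auto
    with j1(2) j2(2) show False by auto
  qed
  have "code_digits (c y) \<subseteq> code_digits (c (k y))"
  proof
    fix j assume "j \<in> code_digits (c y)"
    from coded_rel_from_off_chain[OF off edge[OF this]]
    show "j \<in> code_digits (c (k y))" using injD[OF e] by fastforce
  qed
  then show "k y = y" using code_digits_subset_eq injD[OF c] by metis
qed

theorem rigid_on_coded_rel:
  assumes "inj e" "inj c" "chain_closed e S"
  shows "rigid_on (coded_rel e c) S"
  unfolding rigid_on_def
  using coded_rel_hom_fixes_chain[OF assms(1,3)] coded_rel_hom_fixes_off_chain[OF assms]
  by blast


section \<open>The orbit quantifier of a relation\<close>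

lemma pimg_comp: "pimg h (pimg g A) = pimg (h \<circ> g) A"
  unfolding pimg_def by (auto simp: image_iff)

lemma pimg_id: "pimg id A = A"
  unfolding pimg_def by auto

lemma pimg_mono: "A \<subseteq> B \<Longrightarrow> pimg h A \<subseteq> pimg h B"
  unfolding pimg_def by (rule image_mono)

lemma pimg_inv_pimg: "bij h \<Longrightarrow> pimg (inv h) (pimg h A) = A"
  by (simp add: pimg_comp bij_is_inj pimg_id)

definition orbit_quantifier :: "('a \<Rightarrow> 'a) set \<Rightarrow> ('a \<times> 'a) set \<Rightarrow> ('a \<times> 'a) set set" where
  "orbit_quantifier G R = {A. \<forall>B\<subseteq>A. countable B \<longrightarrow> (\<exists>g\<in>G. B \<subseteq> pimg g R)}"

lemma orbit_quantifier_countable: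
  "countable A \<Longrightarrow> A \<in> orbit_quantifier G R \<longleftrightarrow> (\<exists>g\<in>G. A \<subseteq> pimg g R)"
  unfolding orbit_quantifier_def by blast

lemma subset_in_orbit_quantifier:
  "perm_subgroup G \<Longrightarrow> A \<subseteq> R \<Longrightarrow> A \<in> orbit_quantifier G R"
  unfolding orbit_quantifier_def perm_subgroup_def by (auto simp: pimg_id intro!: bexI[of _ id])

lemma down_closed_orbit_quantifier: "down_closed (orbit_quantifier G R)"
  unfolding down_closed_def orbit_quantifier_def by blast

text \<open>Closedness: membership fails because of a countable witness B, and the countable
  partial function that is True on B separates A from the quantifier.\<close>
lemma q_closed_orbit_quantifier: "q_closed (orbit_quantifier G R)"
  unfolding q_closed_def closed_in_sub_def
proof (intro conjI ballI)
  fix P :: "'a \<times> 'a \<Rightarrow> bool" assume "P \<in> UNIV - {P. Collect P \<in> orbit_quantifier G R}"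
  then obtain B where B: "B \<subseteq> Collect P" "countable B" "\<not> (\<exists>g\<in>G. B \<subseteq> pimg g R)"
    unfolding orbit_quantifier_def by blast
  define s where "s = (\<lambda>x. if x \<in> B then Some True else None)"
  have dom: "dom s = B" unfolding s_def dom_def by auto
  have agrees_subset: "B \<subseteq> Collect P'" if "agrees s P'" for P'
  proof
    fix x assume "x \<in> B"
    then have "s x = Some (P' x)" using that dom unfolding agrees_def by blast
    then show "x \<in> Collect P'" using \<open>x \<in> B\<close> by (simp add: s_def)
  qed
  show "\<exists>s. countable (dom s) \<and> agrees s P \<and>
      (\<forall>P'\<in>{P. Collect P \<in> orbit_quantifier G R}. \<not> agrees s P')"
  proof (intro exI conjI ballI notI)
    show "countable (dom s)" using dom B(2) by simp
    show "agrees s P" using B(1) unfolding agrees_def dom by (auto simp: s_def)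
  next
    fix P' assume "P' \<in> {P. Collect P \<in> orbit_quantifier G R}" "agrees s P'"
    then show False using agrees_subset B unfolding orbit_quantifier_def by blast
  qed
qed auto

lemma orbit_quantifier_image:
  assumes G: "perm_subgroup G" and h: "h \<in> G" and A: "A \<in> orbit_quantifier G R"
  shows "pimg h A \<in> orbit_quantifier G R"
  unfolding orbit_quantifier_def
proof (intro CollectI allI impI)
  fix B assume B: "B \<subseteq> pimg h A" "countable B"
  have bh: "bij h" using G h unfolding perm_subgroup_def by auto
  have "pimg (inv h) B \<subseteq> A" using pimg_mono[OF B(1)] pimg_inv_pimg[OF bh] by metis
  moreover have "countable (pimg (inv h) B)" using B(2) unfolding pimg_def by simp
  ultimately obtain g where g: "g \<in> G" "pimg (inv h) B \<subseteq> pimg g R"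
    using A unfolding orbit_quantifier_def by blast
  have "B = pimg h (pimg (inv h) B)"
    using pimg_inv_pimg[OF bij_imp_bij_inv[OF bh]] by (simp add: inv_inv_eq[OF bh])
  also have "\<dots> \<subseteq> pimg h (pimg g R)" using g(2) by (rule pimg_mono)
  finally show "\<exists>g\<in>G. B \<subseteq> pimg g R"
    using g(1) h G unfolding pimg_comp perm_subgroup_def by blast
qed

lemma orbit_quantifier_fixed:
  assumes G: "perm_subgroup G" and h: "h \<in> G"
  shows "fixes_Q h (orbit_quantifier G R)"
  unfolding fixes_Q_def
proof
  fix A
  have bh: "bij h" and hi: "inv h \<in> G" using G h unfolding perm_subgroup_def by auto
  show "A \<in> orbit_quantifier G R \<longleftrightarrow> pimg h A \<in> orbit_quantifier G R"
    using orbit_quantifier_image[OF G h, of A] orbit_quantifier_image[OF G hi, of "pimg h A"]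
    by (auto simp: pimg_inv_pimg[OF bh])
qed

lemma orbit_quantifier_rigid_extension:
  assumes G: "perm_subgroup G" and rigid: "rigid_on R S" and S: "countable S"
    and p: "inj_on p S" and pQ: "pimg p (R \<inter> S \<times> S) \<in> orbit_quantifier G R"
  shows "\<exists>g\<in>G. \<forall>x\<in>S. g x = p x"
proof -
  have "countable (pimg p (R \<inter> S \<times> S))" unfolding pimg_def using S by simp
  then obtain g where g: "g \<in> G" "pimg p (R \<inter> S \<times> S) \<subseteq> pimg g R"
    using pQ orbit_quantifier_countable by blast
  have bg: "bij g" using G g(1) unfolding perm_subgroup_def by auto
  define k where "k = inv g \<circ> p"
  have "inj_on k S" unfolding k_def
    using p bij_is_inj[OF bij_imp_bij_inv[OF bg]] by (simp add: comp_inj_on inj_on_subset)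
  moreover have "(k x, k y) \<in> R" if "x \<in> S" "y \<in> S" "(x, y) \<in> R" for x y
  proof -
    have "(p x, p y) \<in> pimg g R" using g(2) that unfolding pimg_def by blast
    then obtain u v where "(u, v) \<in> R" "p x = g u" "p y = g v" unfolding pimg_def by auto
    then show ?thesis unfolding k_def using bij_is_inj[OF bg] by (simp add: inv_f_f)
  qed
  ultimately have "\<forall>x\<in>S. k x = x" using rigid unfolding rigid_on_def by blast
  then have "\<forall>x\<in>S. g x = p x" unfolding k_def by (metis bg bij_inv_eq_iff comp_apply)
  then show ?thesis using g(1) by blast
qed

theorem Aut_orbit_quantifier:
  assumes G: "perm_subgroup G" and closed: "closed_in_sub {f. bij f} G"
    and cover: "\<And>D. countable D \<Longrightarrow> \<exists>S. D \<subseteq> S \<and> countable S \<and> rigid_on R S"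
  shows "Aut (orbit_quantifier G R) = G"
proof
  show "G \<subseteq> Aut (orbit_quantifier G R)"
    using orbit_quantifier_fixed[OF G] G unfolding Aut_def perm_subgroup_def by blast
next
  show "Aut (orbit_quantifier G R) \<subseteq> G"
  proof
    fix f assume "f \<in> Aut (orbit_quantifier G R)"
    then have bf: "bij f" and ff: "fixes_Q f (orbit_quantifier G R)" unfolding Aut_def by auto
    show "f \<in> G"
    proof (rule ccontr)
      assume "f \<notin> G"
      then obtain s where s: "countable (dom s)" "agrees s f" "\<forall>g\<in>G. \<not> agrees s g"
        using closed bf unfolding closed_in_sub_def by blast
      obtain S where S: "dom s \<subseteq> S" "countable S" "rigid_on R S" using cover[OF s(1)] by blast
      have "R \<inter> S \<times> S \<in> orbit_quantifier G R" by (rule subset_in_orbit_quantifier[OF G]) blast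
      then have "pimg f (R \<inter> S \<times> S) \<in> orbit_quantifier G R"
        using ff unfolding fixes_Q_def by blast
      then obtain g where "g \<in> G" "\<forall>x\<in>S. g x = f x"
        using orbit_quantifier_rigid_extension[OF G S(3,2) inj_on_subset[OF bij_is_inj[OF bf]]]
        by blast
      moreover have "agrees s g" using s(2) S(1) \<open>\<forall>x\<in>S. g x = f x\<close> unfolding agrees_def by auto
      ultimately show False using s(3) by blast
    qed
  qed
qed

theorem good_orbit_quantifier:
  assumes G: "perm_subgroup G"
    and segments: "\<And>a. countable (underS W a) \<and> rigid_on R (underS W a)"
  shows "good W (orbit_quantifier G R)"
  unfolding good_def
proof (intro conjI allI impI q_closed_orbit_quantifier down_closed_orbit_quantifier)
  fix a p assume p: "inj_on p (underS W a)" and pc: "compatible (underS W a) p (orbit_quantifier G R)"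
  have "R \<inter> underS W a \<times> underS W a \<in> orbit_quantifier G R"
    by (rule subset_in_orbit_quantifier[OF G]) blast
  then have "pimg p (R \<inter> underS W a \<times> underS W a) \<in> orbit_quantifier G R"
    using pc[unfolded compatible_def, rule_format, of "R \<inter> underS W a \<times> underS W a"] by blast
  moreover have "countable (underS W a)" "rigid_on R (underS W a)" using segments by auto
  ultimately obtain g where g: "g \<in> G" "\<forall>x\<in>underS W a. g x = p x"
    using orbit_quantifier_rigid_extension[OF G _ _ p] by blast
  moreover have "bij g" using g(1) G unfolding perm_subgroup_def by blast
  ultimately show "\<exists>f. bij f \<and> fixes_Q f (orbit_quantifier G R) \<and> (\<forall>x\<in>underS W a. f x = p x)"
    using orbit_quantifier_fixed[OF G] by blast
qed


section \<open>Initial segments of omega_1\<close>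

lemma omega1_order_wo_rel:
  assumes "omega1_order W"
  shows "wo_rel W" "Field W = UNIV"
  using assms well_order_on_Field[of UNIV W] unfolding omega1_order_def wo_rel_def by auto

text \<open>Every element has a strict upper bound, as its initial segment is countable.\<close>
lemma omega1_order_AboveS:
  assumes W: "omega1_order W"
  shows "AboveS W {x} \<noteq> {}"
proof -
  have "countable (insert x (underS W x))" using W unfolding omega1_order_def by simp
  then obtain y where y: "y \<notin> insert x (underS W x)"
    using W unfolding omega1_order_def by (metis UNIV_eq_I)
  then have "(x, y) \<in> W"
    using wo_rel.TOTALS[OF omega1_order_wo_rel(1)[OF W]] omega1_order_wo_rel(2)[OF W]
    unfolding underS_def by blast
  with y show ?thesis unfolding AboveS_def omega1_order_wo_rel(2)[OF W] by blast
qed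

lemma omega1_order_bounded:
  assumes W: "omega1_order W" and D: "countable D"
  shows "\<exists>a. D \<subseteq> underS W a"
proof -
  have "countable (D \<union> (\<Union>x\<in>D. underS W x))" using W D unfolding omega1_order_def by auto
  then obtain a where a: "a \<notin> D \<union> (\<Union>x\<in>D. underS W x)"
    using W unfolding omega1_order_def by (metis UNIV_eq_I)
  have "D \<subseteq> underS W a"
    using a wo_rel.TOTALS[OF omega1_order_wo_rel(1)[OF W]] omega1_order_wo_rel(2)[OF W]
    unfolding underS_def by blast
  then show ?thesis by blast
qed

text \<open>The first omega elements of omega_1: an injective increasing chain lying below
  every element outside of it, obtained by iterating the successor from the minimum.\<close>
lemma omega1_initial_chain:
  assumes W: "omega1_order W"
  obtains e where "inj e" "\<And>i. (e i, e (Suc i)) \<in> W" "\<And>y j. y \<notin> range e \<Longrightarrow> (e j, y) \<in> W"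
proof -
  interpret wo_rel W by (rule omega1_order_wo_rel[OF W])
  note Field = omega1_order_wo_rel(2)[OF W]
  define e where "e n = ((\<lambda>x. suc {x}) ^^ n) (minim UNIV)" for n
  have e_Suc: "e (Suc n) = suc {e n}" for n by (simp add: e_def)
  have increasing: "e n \<noteq> e (Suc n) \<and> (e n, e (Suc n)) \<in> W" for n
    using suc_greater[of "{e n}" "e n"] omega1_order_AboveS[OF W] Field by (auto simp: e_Suc)
  have mono: "(e i, e j) \<in> W" if "i \<le> j" for i j
    using that
  proof (induction j rule: dec_induct)
    case base show ?case using REFL Field unfolding refl_on_def by blast
  next
    case (step j) then show ?case using increasing[of j] TRANS by (meson transD)
  qed
  have "inj e"
  proof (rule linorder_injI)
    fix i j :: nat assume "i < j"
    then have "(e (Suc i), e j) \<in> W" using mono by simp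
    then show "e i \<noteq> e j" using increasing[of i] ANTISYM by (metis antisymD)
  qed
  moreover have "(e j, y) \<in> W" if y: "y \<notin> range e" for y j
  proof (induction j)
    case 0
    show ?case using minim_least[of UNIV y] Field by (simp add: e_def)
  next
    case (Suc j)
    have "y \<noteq> e j" using y by blast
    with Suc.IH have "y \<in> AboveS {e j}" unfolding AboveS_def Field by blast
    then show ?case unfolding e_Suc by (rule suc_least_AboveS)
  qed
  ultimately show ?thesis using that increasing by blast
qed

lemma ofilter_chain_closed:
  assumes "ofilter W A" "\<And>i. (e i, e (Suc i)) \<in> W" "\<And>y j. y \<notin> range e \<Longrightarrow> (e j, y) \<in> W"
  shows "chain_closed e A"
  using assms unfolding chain_closed_def ofilter_def under_def by blast

theorem proposition26:
  fixes W :: "'a rel" and G :: "('a \<Rightarrow> 'a) set"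
  assumes "omega1_order W"
    and CH: "(UNIV :: nat set set) \<approx> (UNIV :: 'a set)"
    and "perm_subgroup G"
    and "closed_in_sub {f. bij f} G"
    and "Baire_idx (UNIV :: 'a set) G"
  shows "\<exists>Q. good W Q \<and> Aut Q = G"
proof -
  note W = assms(1) and G = assms(3) and closed = assms(4)
  obtain h :: "nat set \<Rightarrow> 'a" where "bij_betw h UNIV UNIV" using CH unfolding eqpoll_def by blast
  define c where "c = inv h"
  then have c: "inj c" using \<open>bij_betw h UNIV UNIV\<close> by (simp add: bij_betw_def surj_imp_inj_inv)
  obtain e where e: "inj e" "\<And>i. (e i, e (Suc i)) \<in> W" "\<And>y j. y \<notin> range e \<Longrightarrow> (e j, y) \<in> W"
    using omega1_initial_chain[OF W] by blast
  have segments: "countable (underS W a) \<and> rigid_on (coded_rel e c) (underS W a)" for a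
  proof
    show "countable (underS W a)" using W unfolding omega1_order_def by blast
    have "ofilter W (underS W a)" by (rule wo_rel.underS_ofilter[OF omega1_order_wo_rel(1)[OF W]])
    then have "chain_closed e (underS W a)" using e(2,3) by (rule ofilter_chain_closed)
    then show "rigid_on (coded_rel e c) (underS W a)" by (rule rigid_on_coded_rel[OF e(1) c])
  qed
  have cover: "\<exists>S. D \<subseteq> S \<and> countable S \<and> rigid_on (coded_rel e c) S" if D: "countable D" for D
  proof -
    obtain a where "D \<subseteq> underS W a" using omega1_order_bounded[OF W D] by blast
    then show ?thesis using segments[of a] by blast
  qed
  have "good W (orbit_quantifier G (coded_rel e c))" by (rule good_orbit_quantifier[OF G segments])
  moreover have "Aut (orbit_quantifier G (coded_rel e c)) = G"
    by (rule Aut_orbit_quantifier[OF G closed cover])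
  ultimately show ?thesis by blast
qed

end
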